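(* For the spheroid geodesic system with Lagrangian $\mathcal L=\tfrac12\big(\sin^2\theta\,\dot\phi^2+(\cos^2\theta+R^2\sin^2\theta)\dot\theta^2\big)$ ($R>0$, $R\neq1$), let $L=\sin^2\theta\,\dot\phi$, $E=\mathcal L$, $C=2E/L^2$, $s=\mathrm{sgn}(\dot\theta)\mathrm{sgn}(L)$, and let $\Theta=\phi-s\,\mathcal A(\theta;C)$ and $T=t-s\,L^{-1}\mathcal B(\theta;C)$, where $$\mathcal A(\theta;C)=\int_{\theta_*}^{\theta}\sqrt{\frac{\cot^2\vartheta+R^2}{C\sin^2\vartheta-1}}\,d\vartheta,\qquad \mathcal B(\theta;C)=\int_{\theta_*}^{\theta}\sqrt{\frac{\cos^2\vartheta+R^2\sin^2\vartheta}{C\sin^2\vartheta-1}}\,\sin\vartheta\,d\vartheta,\qquad \theta_*=\arcsin(1/\sqrt C).$$ Then, with respect to the Poisson bracket, on the region where these functions are smooth, $$\{E,L\}=0,\quad \{E,\Theta\}=0,\quad \{E,T\}=1,\quad \{L,\Theta\}=-1,\quad \{L,T\}=0,\quad \{\Theta,T\}=0 .$$ Consequently the four corresponding Noether (variational) symmetries, obtained from these conserved integrals, mutually commute, i.e. span a four-dimensional abelian Lie algebra. *)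

theory Defs
  imports "HOL-Analysis.Analysis"
begin

text \<open>Configuration coordinates (phi, theta), canonical
momenta (pphi, ptheta) obtained by the Legendre transform of the Lagrangian
  Lag = 1/2 (sin^2 theta phidot^2 + (cos^2 theta + R^2 sin^2 theta) thetadot^2).
Phase-space observables may depend explicitly on time t; they are functions
of (t, phi, theta, pphi, ptheta).\<close>

definition gmet :: "real \<Rightarrow> real \<Rightarrow> real" where
  "gmet R \<theta> = cos \<theta> ^ 2 + R ^ 2 * sin \<theta> ^ 2"

definition lagr :: "real \<Rightarrow> real \<Rightarrow> real \<Rightarrow> real \<Rightarrow> real" where
  "lagr R \<theta> vphi vtheta = 1/2 * (sin \<theta> ^ 2 * vphi ^ 2 + gmet R \<theta> * vtheta ^ 2)"

text \<open>Velocities in terms of momenta (inverse Legendre transform):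
 pphi = sin^2 theta phidot, ptheta = gmet theta thetadot.\<close>
definition phidot :: "real \<Rightarrow> real \<Rightarrow> real" where
  "phidot \<theta> pphi = pphi / sin \<theta> ^ 2"

definition thetadot :: "real \<Rightarrow> real \<Rightarrow> real \<Rightarrow> real" where
  "thetadot R \<theta> ptheta = ptheta / gmet R \<theta>"

type_synonym obs = "real \<Rightarrow> real \<Rightarrow> real \<Rightarrow> real \<Rightarrow> real \<Rightarrow> real"

definition Eobs :: "real \<Rightarrow> obs" where
  "Eobs R = (\<lambda>t \<phi> \<theta> pphi ptheta. lagr R \<theta> (phidot \<theta> pphi) (thetadot R \<theta> ptheta))"

definition Lobs :: "obs" where
  "Lobs = (\<lambda>t \<phi> \<theta> pphi ptheta. sin \<theta> ^ 2 * phidot \<theta> pphi)"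

definition Cobs :: "real \<Rightarrow> obs" where
  "Cobs R = (\<lambda>t \<phi> \<theta> pphi ptheta.
      2 * Eobs R t \<phi> \<theta> pphi ptheta / (Lobs t \<phi> \<theta> pphi ptheta) ^ 2)"

definition sobs :: "real \<Rightarrow> obs" where
  "sobs R = (\<lambda>t \<phi> \<theta> pphi ptheta.
      sgn (thetadot R \<theta> ptheta) * sgn (Lobs t \<phi> \<theta> pphi ptheta))"

definition thetastar :: "real \<Rightarrow> real" where
  "thetastar C = arcsin (1 / sqrt C)"

definition Aint :: "real \<Rightarrow> real \<Rightarrow> real \<Rightarrow> real" where
  "Aint R \<theta> C = integral {thetastar C..\<theta>}
      (\<lambda>v. sqrt ((cot v ^ 2 + R ^ 2) / (C * sin v ^ 2 - 1)))"

definition Bint :: "real \<Rightarrow> real \<Rightarrow> real \<Rightarrow> real" where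
  "Bint R \<theta> C = integral {thetastar C..\<theta>}
      (\<lambda>v. sqrt ((cos v ^ 2 + R ^ 2 * sin v ^ 2) / (C * sin v ^ 2 - 1)) * sin v)"

definition Thetaobs :: "real \<Rightarrow> obs" where
  "Thetaobs R = (\<lambda>t \<phi> \<theta> pphi ptheta.
      \<phi> - sobs R t \<phi> \<theta> pphi ptheta * Aint R \<theta> (Cobs R t \<phi> \<theta> pphi ptheta))"

definition Tobs :: "real \<Rightarrow> obs" where
  "Tobs R = (\<lambda>t \<phi> \<theta> pphi ptheta.
      t - sobs R t \<phi> \<theta> pphi ptheta * inverse (Lobs t \<phi> \<theta> pphi ptheta)
          * Bint R \<theta> (Cobs R t \<phi> \<theta> pphi ptheta))"

definition d_phi :: "obs \<Rightarrow> obs" where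
  "d_phi f = (\<lambda>t \<phi> \<theta> a b. deriv (\<lambda>x. f t x \<theta> a b) \<phi>)"
definition d_theta :: "obs \<Rightarrow> obs" where
  "d_theta f = (\<lambda>t \<phi> \<theta> a b. deriv (\<lambda>x. f t \<phi> x a b) \<theta>)"
definition d_pphi :: "obs \<Rightarrow> obs" where
  "d_pphi f = (\<lambda>t \<phi> \<theta> a b. deriv (\<lambda>x. f t \<phi> \<theta> x b) a)"
definition d_ptheta :: "obs \<Rightarrow> obs" where
  "d_ptheta f = (\<lambda>t \<phi> \<theta> a b. deriv (\<lambda>x. f t \<phi> \<theta> a x) b)"

definition poisson :: "obs \<Rightarrow> obs \<Rightarrow> obs" where
  "poisson f g = (\<lambda>t \<phi> \<theta> a b.
      d_phi f t \<phi> \<theta> a b * d_pphi g t \<phi> \<theta> a b - d_pphi f t \<phi> \<theta> a b * d_phi g t \<phi> \<theta> a b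
    + d_theta f t \<phi> \<theta> a b * d_ptheta g t \<phi> \<theta> a b - d_ptheta f t \<phi> \<theta> a b * d_theta g t \<phi> \<theta> a b)"

end

(* The integrands of A and B have an integrable singularity at thetastar C, which moves with C,
   so A and B cannot be differentiated in C under the integral sign. The substitution
   cos \<vartheta> = k sin w with k^2 = 1 - 1/C sends thetastar C to w = pi/2 and writes both integrals
   as C^(-1/2) times an integral from w(\<theta>, C) to pi/2 of an integrand that is smooth in (C, w).
   Hence A and B are jointly differentiable in (\<theta>, C), and their \<theta>-derivatives are the
   original integrands.

   On the region, L = pphi, E and C are functions of (\<theta>, pphi, ptheta) with {E, C} = 0, and s is
   locally constant, so every bracket follows from the chain rule. {E, \<Theta>} = 0, {E, T} = 1,
   {L, \<Theta>} = -1 and {L, T} = 0 only use the \<theta>-derivatives of A and B, while {\<Theta>, T} = 0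
   amounts to the identity B = 2 (\<partial>A/\<partial>C - C \<partial>B/\<partial>C). *)

theory Submission
  imports Defs
begin

section \<open>Parametric integrals with a moving lower limit\<close>

lemma has_derivative_integral_lower_limit_param:
  fixes F dF :: "real \<Rightarrow> real \<Rightarrow> real"
  assumes X: "open X" "convex X"
    and contF: "continuous_on (X \<times> {a..b}) (\<lambda>(c, w). F c w)"
    and dF: "\<And>c w. c \<in> X \<Longrightarrow> w \<in> {a..b} \<Longrightarrow> ((\<lambda>c. F c w) has_field_derivative dF c w) (at c)"
    and contdF: "continuous_on (X \<times> {a..b}) (\<lambda>(c, w). dF c w)"
    and c0: "c0 \<in> X" and x0: "a < x0" "x0 < b"
  shows "((\<lambda>(c, x). integral {x..b} (F c)) has_derivative
           (\<lambda>(dc, dx). integral {x0..b} (dF c0) * dc - F c0 x0 * dx)) (at (c0, x0))"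
proof -
  let ?Y = "{a<..<b}"
  have contFc: "continuous_on {a..b} (F c)" if "c \<in> X" for c
    by (rule continuous_on_compose2[OF contF, where f="\<lambda>w. (c, w)", simplified])
       (auto intro!: continuous_intros simp: that)
  have sub: "{x0..b} \<subseteq> {a..b}" using x0 by auto
  have dc: "((\<lambda>c. integral {x0..b} (F c)) has_derivative (\<lambda>dc. integral {x0..b} (dF c0) * dc))
      (at c0 within X)"
  proof -
    have "((\<lambda>c. integral (cbox x0 b) (F c)) has_field_derivative integral (cbox x0 b) (dF c0))
        (at c0 within X)"
    proof (rule leibniz_rule_field_derivative)
      show "((\<lambda>c. F c w) has_field_derivative dF c w) (at c within X)"
        if "c \<in> X" "w \<in> cbox x0 b" for c w
        using dF[of c w] that sub by (auto intro: has_field_derivative_at_within)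
      show "F c integrable_on cbox x0 b" if "c \<in> X" for c
        using continuous_on_subset[OF contFc[OF that] sub]
        by (auto intro: integrable_continuous_real)
      show "continuous_on (X \<times> cbox x0 b) (\<lambda>(c, w). dF c w)"
        using contdF sub by (auto intro: continuous_on_subset)
    qed (use c0 X in auto)
    then show ?thesis by (simp add: has_field_derivative_def)
  qed
  have dx: "((\<lambda>x. integral {x..b} (F c)) has_derivative blinfun_apply (blinfun_mult_left (- F c x)))
      (at x within ?Y)" if "c \<in> X" "x \<in> ?Y" for c x
  proof -
    have "((\<lambda>x. integral {x..b} (F c)) has_real_derivative - F c x) (at x within {a..b})"
      using that contFc by (intro integral_has_real_derivative') auto
    then have "((\<lambda>x. integral {x..b} (F c)) has_real_derivative - F c x) (at x within ?Y)"
      by (rule has_field_derivative_subset) auto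
    then show ?thesis unfolding has_field_derivative_def
      by (rule has_derivative_eq_rhs) (auto simp: fun_eq_iff)
  qed
  have "continuous (at (c0, x0) within X \<times> ?Y) (\<lambda>(c, x). F c x)"
  proof -
    have "continuous_on (X \<times> ?Y) (\<lambda>(c, x). F c x)"
      by (rule continuous_on_subset[OF contF]) auto
    then show ?thesis
      using c0 x0 by (simp add: continuous_on_eq_continuous_within)
  qed
  then have cont: "continuous (at (c0, x0) within X \<times> ?Y) (\<lambda>(c, x). blinfun_mult_left (- F c x))"
    using bounded_linear.continuous[OF bounded_linear_blinfun_mult_left continuous_minus]
    by (simp add: case_prod_beta')
  have "((\<lambda>(c, x). integral {x..b} (F c)) has_derivative
      (\<lambda>(dc, dx). integral {x0..b} (dF c0) * dc + blinfun_mult_left (- F c0 x0) dx))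
      (at (c0, x0) within X \<times> ?Y)"
    by (rule has_derivative_partialsI[OF dc dx cont]) (use x0 in auto)
  moreover have "at (c0, x0) within X \<times> ?Y = at (c0, x0)"
    using c0 x0 X by (intro at_within_open) (auto intro!: open_Times)
  ultimately show ?thesis
    by (auto elim!: has_derivative_eq_rhs simp: fun_eq_iff)
qed

lemma DERIV_compose_binary:
  assumes F: "((\<lambda>z. F (fst z) (snd z)) has_derivative (\<lambda>dz. X * fst dz + Y * snd dz)) (at (x, c))"
    and f: "(f has_real_derivative f') (at v)" "f v = x"
    and g: "(g has_real_derivative g') (at v)" "g v = c"
  shows "((\<lambda>v. F (f v) (g v)) has_real_derivative X * f' + Y * g') (at v)"
proof -
  have "((\<lambda>v. (f v, g v)) has_derivative (\<lambda>h. (f' * h, g' * h))) (at v)"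
    using f g unfolding has_field_derivative_def by (intro has_derivative_Pair)
  moreover have "((\<lambda>z. F (fst z) (snd z)) has_derivative (\<lambda>dz. X * fst dz + Y * snd dz))
      (at ((\<lambda>v. (f v, g v)) v))"
    using F f g by simp
  ultimately have "((\<lambda>v. F (f v) (g v)) has_derivative (\<lambda>h. X * (f' * h) + Y * (g' * h))) (at v)"
    using diff_chain_at by (fastforce simp: o_def)
  then show ?thesis unfolding has_field_derivative_def
    by (rule has_derivative_eq_rhs) (auto simp: fun_eq_iff algebra_simps)
qed

section \<open>The substitution\<close>

definition ksq :: "real \<Rightarrow> real" where
  "ksq c = 1 - 1 / c"

(* For c > 1 the substitution cos \<vartheta> = sqrt (ksq c) * sin w maps \<vartheta> = thetastar c to
   w = pi/2 and \<vartheta> = x to w = sub_angle x c. *)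
definition sub_angle :: "real \<Rightarrow> real \<Rightarrow> real" where
  "sub_angle x c = arcsin (cos x / sqrt (ksq c))"

lemma ksq_pos: "1 < c \<Longrightarrow> 0 < ksq c"
  and ksq_less_1: "1 < c \<Longrightarrow> ksq c < 1"
  by (auto simp: ksq_def field_simps)

lemma one_less_mult_sin_sq_iff:
  assumes "0 < c"
  shows "1 < c * sin x ^ 2 \<longleftrightarrow> cos x ^ 2 < ksq c"
    and "1 \<le> c * sin x ^ 2 \<longleftrightarrow> cos x ^ 2 \<le> ksq c"
proof -
  have "c * sin x ^ 2 = c - c * cos x ^ 2"
    by (simp add: sin_squared_eq algebra_simps)
  then show "1 < c * sin x ^ 2 \<longleftrightarrow> cos x ^ 2 < ksq c"
    and "1 \<le> c * sin x ^ 2 \<longleftrightarrow> cos x ^ 2 \<le> ksq c"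
    using assms by (auto simp: ksq_def field_simps)
qed

lemma one_less_mult_sin_sq_imp: "1 < c * sin x ^ 2 \<Longrightarrow> 1 < (c::real)"
proof (rule ccontr)
  assume less: "1 < c * sin x ^ 2" and "\<not> 1 < c"
  have "sin x ^ 2 \<le> 1"
    using sin_cos_squared_add[of x] zero_le_power2[of "cos x"] by linarith
  then have "c * sin x ^ 2 \<le> 1"
    using \<open>\<not> 1 < c\<close> by (cases "c \<le> 0") (auto intro: mult_nonpos_nonneg mult_le_one)
  with less show False by simp
qed

lemma
  assumes "1 < c"
  shows thetastar_pos: "0 < thetastar c"
    and thetastar_less_pi_half: "thetastar c < pi / 2"
    and cos_thetastar: "cos (thetastar c) = sqrt (ksq c)"
proof -
  have bounds: "0 < 1 / sqrt c" "1 / sqrt c < 1"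
    using assms by auto
  show "0 < thetastar c"
    using arcsin_less_arcsin[of 0 "1 / sqrt c"] bounds by (simp add: thetastar_def)
  show "thetastar c < pi / 2"
    using arcsin_less_arcsin[of "1 / sqrt c" 1] bounds by (simp add: thetastar_def)
  show "cos (thetastar c) = sqrt (ksq c)"
  proof -
    have "cos (thetastar c) = sqrt (1 - (1 / sqrt c) ^ 2)"
      unfolding thetastar_def by (intro cos_arcsin) (use bounds in linarith)+
    also have "(1 / sqrt c) ^ 2 = 1 / c"
      using assms by (simp add: power_divide)
    finally show ?thesis
      by (simp add: ksq_def)
  qed
qed

lemma abs_cos_less_cos_iff:
  fixes a x :: real
  assumes "0 \<le> a" "a \<le> pi / 2" "0 \<le> x" "x \<le> pi"
  shows "\<bar>cos x\<bar> < cos a \<longleftrightarrow> a < x \<and> x < pi - a"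
    and "\<bar>cos x\<bar> \<le> cos a \<longleftrightarrow> a \<le> x \<and> x \<le> pi - a"
proof -
  have "cos x < cos a \<longleftrightarrow> a < x" "cos x \<le> cos a \<longleftrightarrow> a \<le> x"
    using cos_mono_less_eq[of x a] cos_mono_le_eq[of x a] assms by simp_all
  moreover have "- cos x < cos a \<longleftrightarrow> a < pi - x" "- cos x \<le> cos a \<longleftrightarrow> a \<le> pi - x"
    using cos_mono_less_eq[of "pi - x" a] cos_mono_le_eq[of "pi - x" a] assms by simp_all
  ultimately show "\<bar>cos x\<bar> < cos a \<longleftrightarrow> a < x \<and> x < pi - a"
    and "\<bar>cos x\<bar> \<le> cos a \<longleftrightarrow> a \<le> x \<and> x \<le> pi - a"
    unfolding abs_less_iff abs_le_iff by argo+
qed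

lemma one_less_mult_sin_sq_iff_thetastar:
  assumes "1 < c" "0 \<le> x" "x \<le> pi"
  shows "1 < c * sin x ^ 2 \<longleftrightarrow> thetastar c < x \<and> x < pi - thetastar c"
    and "1 \<le> c * sin x ^ 2 \<longleftrightarrow> thetastar c \<le> x \<and> x \<le> pi - thetastar c"
proof -
  have "cos x ^ 2 < ksq c \<longleftrightarrow> \<bar>cos x\<bar> < sqrt (ksq c)"
    and "cos x ^ 2 \<le> ksq c \<longleftrightarrow> \<bar>cos x\<bar> \<le> sqrt (ksq c)"
    by (simp_all flip: real_sqrt_abs add: real_sqrt_less_iff)
  then show "1 < c * sin x ^ 2 \<longleftrightarrow> thetastar c < x \<and> x < pi - thetastar c"
    and "1 \<le> c * sin x ^ 2 \<longleftrightarrow> thetastar c \<le> x \<and> x \<le> pi - thetastar c"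
    using assms thetastar_pos[of c] thetastar_less_pi_half[of c]
    by (simp_all add: one_less_mult_sin_sq_iff abs_cos_less_cos_iff flip: cos_thetastar)
qed

lemma abs_cos_div_sqrt_ksq_le_1:
  assumes "1 < c" "1 \<le> c * sin x ^ 2"
  shows "\<bar>cos x / sqrt (ksq c)\<bar> \<le> 1"
proof -
  have "cos x ^ 2 \<le> ksq c"
    using assms one_less_mult_sin_sq_iff(2)[of c x] by simp
  then have "sqrt (cos x ^ 2) \<le> sqrt (ksq c)"
    by (rule real_sqrt_le_mono)
  then have "\<bar>cos x\<bar> \<le> sqrt (ksq c)"
    by simp
  then show ?thesis
    using ksq_pos[OF assms(1)] by (simp add: divide_le_eq_1)
qed

lemma abs_cos_div_sqrt_ksq_less_1:
  assumes "1 < c * sin x ^ 2"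
  shows "\<bar>cos x / sqrt (ksq c)\<bar> < 1"
proof -
  have c: "1 < c"
    by (rule one_less_mult_sin_sq_imp[OF assms])
  have "cos x ^ 2 < ksq c"
    using assms one_less_mult_sin_sq_iff(1)[of c x] c by simp
  then have "sqrt (cos x ^ 2) < sqrt (ksq c)"
    by (rule real_sqrt_less_mono)
  then have "\<bar>cos x\<bar> < sqrt (ksq c)"
    by simp
  then show ?thesis
    using ksq_pos[OF c] by (simp add: divide_less_eq_1)
qed

lemma
  assumes "1 < c * sin x ^ 2"
  shows sin_sub_angle: "sin (sub_angle x c) = cos x / sqrt (ksq c)"
    and cos_sub_angle_pos: "0 < cos (sub_angle x c)"
    and sub_angle_bounds: "- pi / 2 < sub_angle x c" "sub_angle x c < pi / 2"
    and cos_sub_angle: "sqrt (ksq c) * cos (sub_angle x c) * sqrt c = sqrt (c * sin x ^ 2 - 1)"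
proof -
  have c: "1 < c" and k: "0 < ksq c"
    using one_less_mult_sin_sq_imp[OF assms] ksq_pos by auto
  define u where "u = cos x / sqrt (ksq c)"
  have u: "- 1 < u" "u < 1"
    using abs_cos_div_sqrt_ksq_less_1[OF assms] unfolding u_def by linarith+
  show "sin (sub_angle x c) = cos x / sqrt (ksq c)"
    using u by (simp add: sub_angle_def u_def[symmetric])
  show "- pi / 2 < sub_angle x c" "sub_angle x c < pi / 2"
    using arcsin_lt_bounded[OF u] by (simp_all add: sub_angle_def u_def)
  then show "0 < cos (sub_angle x c)"
    by (intro cos_gt_zero_pi) auto
  have "cos (sub_angle x c) = sqrt (1 - u ^ 2)"
    using u by (simp add: sub_angle_def u_def[symmetric] cos_arcsin)
  then have "sqrt (ksq c) * cos (sub_angle x c) * sqrt c = sqrt ((ksq c - cos x ^ 2) * c)"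
    using k by (simp add: u_def power_divide real_sqrt_mult[symmetric] field_simps)
  also have "(ksq c - cos x ^ 2) * c = c * sin x ^ 2 - 1"
    using c by (simp add: ksq_def cos_squared_eq field_simps)
  finally show "sqrt (ksq c) * cos (sub_angle x c) * sqrt c = sqrt (c * sin x ^ 2 - 1)" .
qed

lemma sub_angle_thetastar: "1 < c \<Longrightarrow> sub_angle (thetastar c) c = pi / 2"
  using ksq_pos[of c] by (simp add: sub_angle_def cos_thetastar)

lemma has_derivative_sub_angle:
  assumes "1 < c * sin x ^ 2"
  shows "((\<lambda>z. sub_angle (fst z) (snd z)) has_derivative
     (\<lambda>dz. - sin x / (sqrt (ksq c) * cos (sub_angle x c)) * fst dz
          - sin (sub_angle x c) / (2 * c * (c - 1) * cos (sub_angle x c)) * snd dz)) (at (x, c))"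
proof -
  have c: "1 < c" and k: "0 < ksq c"
    using one_less_mult_sin_sq_imp[OF assms] ksq_pos by auto
  have u: "- 1 < cos x / sqrt (ksq c)" "cos x / sqrt (ksq c) < 1"
    using abs_cos_div_sqrt_ksq_less_1[OF assms] by linarith+
  have cos_w: "cos (sub_angle x c) = sqrt (1 - (cos x / sqrt (ksq c)) ^ 2)"
    using u by (simp add: sub_angle_def cos_arcsin)
  have inverse_ksq: "inverse (sqrt (ksq c)) * inverse (sqrt (ksq c)) = c / (c - 1)"
    using c k by (simp add: ksq_def field_simps flip: inverse_mult_distrib)
  have "((\<lambda>z. arcsin (cos (fst z) / sqrt (1 - 1 / snd z))) has_derivative
     (\<lambda>dz. - sin x / (sqrt (ksq c) * cos (sub_angle x c)) * fst dz
          - sin (sub_angle x c) / (2 * c * (c - 1) * cos (sub_angle x c)) * snd dz)) (at (x, c))"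
    apply (rule has_derivative_eq_rhs)
     apply (rule derivative_eq_intros | use u c k in \<open>simp add: ksq_def; fail\<close>)+
    using c cos_sub_angle_pos[OF assms]
     apply (simp add: fun_eq_iff cos_w[symmetric] sin_sub_angle[OF assms] ksq_def[symmetric])
    using c k by (simp add: divide_simps inverse_ksq abs_of_pos) (simp add: ksq_def field_simps)
  then show ?thesis
    unfolding sub_angle_def ksq_def .
qed

lemma continuous_on_sub_angle:
  assumes "1 < c"
    and "\<And>x. x \<in> S \<Longrightarrow> 1 \<le> c * sin x ^ 2"
  shows "continuous_on S (\<lambda>x. sub_angle x c)"
proof -
  have "- 1 \<le> cos x / sqrt (ksq c) \<and> cos x / sqrt (ksq c) \<le> 1" if "x \<in> S" for x
    using abs_cos_div_sqrt_ksq_le_1[OF assms(1) assms(2)[OF that]] by linarith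
  then show ?thesis
    unfolding sub_angle_def using ksq_pos[OF assms(1)] by (intro continuous_intros) auto
qed

(* In terms of \<vartheta> with cos \<vartheta> = sqrt (ksq c) * sin w: gmet_sub R c w = gmet R \<vartheta> and
   sinsq_sub c w = sin \<vartheta> ^ 2; the integrands of A and B become Asub R c w / sqrt c and
   Bsub R c w / sqrt c. *)
definition gmet_sub :: "real \<Rightarrow> real \<Rightarrow> real \<Rightarrow> real" where
  "gmet_sub R c w = R ^ 2 - (R ^ 2 - 1) * ksq c * sin w ^ 2"

definition sinsq_sub :: "real \<Rightarrow> real \<Rightarrow> real" where
  "sinsq_sub c w = 1 - ksq c * sin w ^ 2"

definition Bsub :: "real \<Rightarrow> real \<Rightarrow> real \<Rightarrow> real" where
  "Bsub R c w = sqrt (gmet_sub R c w)"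

definition Asub :: "real \<Rightarrow> real \<Rightarrow> real \<Rightarrow> real" where
  "Asub R c w = Bsub R c w / sinsq_sub c w"

definition Bsub_dc :: "real \<Rightarrow> real \<Rightarrow> real \<Rightarrow> real" where
  "Bsub_dc R c w = - ((R ^ 2 - 1) * sin w ^ 2 / c ^ 2) / (2 * Bsub R c w)"

definition Asub_dc :: "real \<Rightarrow> real \<Rightarrow> real \<Rightarrow> real" where
  "Asub_dc R c w =
     Bsub_dc R c w / sinsq_sub c w + Bsub R c w * (sin w ^ 2 / c ^ 2) / sinsq_sub c w ^ 2"

lemma ksq_mult_sin_sq_bounds:
  assumes "1 < c"
  shows "0 \<le> ksq c * sin w ^ 2" "ksq c * sin w ^ 2 < 1"
proof -
  have "sin w ^ 2 \<le> 1"
    using sin_cos_squared_add[of w] zero_le_power2[of "cos w"] by linarith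
  moreover have "0 < ksq c" "ksq c < 1"
    using ksq_pos[OF assms] ksq_less_1[OF assms] by auto
  ultimately have "ksq c * sin w ^ 2 \<le> ksq c"
    using mult_left_le[of "sin w ^ 2" "ksq c"] by simp
  then show "0 \<le> ksq c * sin w ^ 2" "ksq c * sin w ^ 2 < 1"
    using \<open>0 < ksq c\<close> \<open>ksq c < 1\<close> by (simp, linarith)
qed

lemma sinsq_sub_pos: "1 < c \<Longrightarrow> 0 < sinsq_sub c w"
  using ksq_mult_sin_sq_bounds[of c w] by (simp add: sinsq_sub_def)

lemma gmet_sub_pos:
  assumes "0 < R" "1 < c"
  shows "0 < gmet_sub R c w"
proof -
  have "gmet_sub R c w = R ^ 2 * sinsq_sub c w + ksq c * sin w ^ 2"
    by (simp add: gmet_sub_def sinsq_sub_def algebra_simps)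
  then show ?thesis
    using assms sinsq_sub_pos[of c w] ksq_mult_sin_sq_bounds[of c w] by (simp add: add_pos_nonneg)
qed

lemma Bsub_pos: "0 < R \<Longrightarrow> 1 < c \<Longrightarrow> 0 < Bsub R c w"
  using gmet_sub_pos by (simp add: Bsub_def)

lemma gmet_sub_sub_angle:
  assumes "1 < c * sin x ^ 2"
  shows "gmet_sub R c (sub_angle x c) = gmet R x"
    and "sinsq_sub c (sub_angle x c) = sin x ^ 2"
proof -
  have k: "ksq c * sin (sub_angle x c) ^ 2 = cos x ^ 2"
    using ksq_pos[OF one_less_mult_sin_sq_imp[OF assms]]
    by (simp add: sin_sub_angle[OF assms] power_divide)
  have "gmet_sub R c (sub_angle x c) = R ^ 2 - (R ^ 2 - 1) * (ksq c * sin (sub_angle x c) ^ 2)"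
    by (simp add: gmet_sub_def mult.assoc)
  also have "\<dots> = gmet R x"
    unfolding k by (simp add: gmet_def sin_squared_eq algebra_simps)
  finally show "gmet_sub R c (sub_angle x c) = gmet R x" .
  show "sinsq_sub c (sub_angle x c) = sin x ^ 2"
    unfolding sinsq_sub_def k by (simp add: sin_squared_eq)
qed

lemma has_field_derivative_Bsub:
  assumes "0 < R" "1 < c"
  shows "((\<lambda>c. Bsub R c w) has_field_derivative Bsub_dc R c w) (at c)"
  unfolding Bsub_def gmet_sub_def ksq_def
  apply (rule DERIV_cong)
   apply (rule derivative_eq_intros refl | use assms gmet_sub_pos[OF assms, of w] in
      \<open>simp add: gmet_sub_def ksq_def; fail\<close>)+
  using assms by (simp add: Bsub_dc_def Bsub_def gmet_sub_def ksq_def field_simps power2_eq_square)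

lemma has_field_derivative_Asub:
  assumes "0 < R" "1 < c"
  shows "((\<lambda>c. Asub R c w) has_field_derivative Asub_dc R c w) (at c)"
proof -
  let ?s = "sinsq_sub c w"
  have "((\<lambda>c. sinsq_sub c w) has_field_derivative - (sin w ^ 2 / c ^ 2)) (at c)"
    unfolding sinsq_sub_def ksq_def
    using assms by (auto intro!: derivative_eq_intros simp: field_simps power2_eq_square)
  from DERIV_divide[OF has_field_derivative_Bsub[OF assms, of w] this]
  have "((\<lambda>c. Asub R c w) has_field_derivative
      (Bsub_dc R c w * ?s - Bsub R c w * - (sin w ^ 2 / c ^ 2)) / (?s * ?s)) (at c)"
    using sinsq_sub_pos[OF assms(2), of w] by (simp add: Asub_def)
  moreover have "(d * ?s - Bsub R c w * - q) / (?s * ?s) = d / ?s + Bsub R c w * q / ?s ^ 2"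
    for d q
    using sinsq_sub_pos[OF assms(2), of w] by (simp add: field_simps power2_eq_square)
  ultimately show ?thesis
    unfolding Asub_dc_def by (rule DERIV_cong)
qed

lemma continuous_on_ksq_fst: "continuous_on ({1<..} \<times> W) (\<lambda>z. ksq (fst z))"
  unfolding ksq_def by (intro continuous_intros) auto

lemma continuous_on_Bsub: "continuous_on ({1<..} \<times> W) (\<lambda>(c, w). Bsub R c w)"
  unfolding case_prod_beta' Bsub_def gmet_sub_def
  by (intro continuous_intros continuous_on_ksq_fst)

lemma continuous_on_sinsq_sub: "continuous_on ({1<..} \<times> W) (\<lambda>(c, w). sinsq_sub c w)"
  unfolding case_prod_beta' sinsq_sub_def
  by (intro continuous_intros continuous_on_ksq_fst)

lemma continuous_on_Asub: "continuous_on ({1<..} \<times> W) (\<lambda>(c, w). Asub R c w)"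
  using continuous_on_Bsub continuous_on_sinsq_sub
  unfolding case_prod_beta' Asub_def
  by (intro continuous_intros) (auto simp: sinsq_sub_pos[THEN less_imp_neq, symmetric])

lemma continuous_on_Bsub_dc: "0 < R \<Longrightarrow> continuous_on ({1<..} \<times> W) (\<lambda>(c, w). Bsub_dc R c w)"
  using continuous_on_Bsub
  unfolding case_prod_beta' Bsub_dc_def
  by (intro continuous_intros) (auto simp: Bsub_pos[THEN less_imp_neq, symmetric])

lemma continuous_on_Asub_dc: "0 < R \<Longrightarrow> continuous_on ({1<..} \<times> W) (\<lambda>(c, w). Asub_dc R c w)"
  using continuous_on_Bsub continuous_on_Bsub_dc continuous_on_sinsq_sub
  unfolding case_prod_beta' Asub_dc_def
  by (intro continuous_intros) (auto simp: sinsq_sub_pos[THEN less_imp_neq, symmetric])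

lemma continuous_on_slice:
  assumes "continuous_on ({1<..} \<times> W) (\<lambda>(c, w). F c w)" "1 < c"
  shows "continuous_on W (F c)"
  by (rule continuous_on_compose2[OF assms(1), where f="\<lambda>w. (c, w)", simplified])
    (auto intro!: continuous_intros simp: assms(2))

definition subst_integral :: "(real \<Rightarrow> real \<Rightarrow> real) \<Rightarrow> real \<Rightarrow> real \<Rightarrow> real" where
  "subst_integral F x c = integral {sub_angle x c..pi / 2} (F c) / sqrt c"

definition subst_integral_dc ::
    "(real \<Rightarrow> real \<Rightarrow> real) \<Rightarrow> (real \<Rightarrow> real \<Rightarrow> real) \<Rightarrow> real \<Rightarrow> real \<Rightarrow> real" where
  "subst_integral_dc F dF x c =
     (integral {sub_angle x c..pi / 2} (dF c)
       + F c (sub_angle x c) * sin (sub_angle x c) / (2 * c * (c - 1) * cos (sub_angle x c)))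
       / sqrt c
     - integral {sub_angle x c..pi / 2} (F c) / (2 * c * sqrt c)"

lemma has_derivative_integral_from_sub_angle:
  fixes F dF :: "real \<Rightarrow> real \<Rightarrow> real"
  assumes contF: "continuous_on ({1<..} \<times> {-pi/2..pi/2}) (\<lambda>(c, w). F c w)"
    and dF: "\<And>c w. 1 < c \<Longrightarrow> w \<in> {-pi/2..pi/2} \<Longrightarrow> ((\<lambda>c. F c w) has_field_derivative dF c w) (at c)"
    and contdF: "continuous_on ({1<..} \<times> {-pi/2..pi/2}) (\<lambda>(c, w). dF c w)"
    and region: "1 < c * sin x ^ 2"
  shows "((\<lambda>z. integral {sub_angle (fst z) (snd z)..pi/2} (F (snd z))) has_derivative
           (\<lambda>dz. integral {sub_angle x c..pi/2} (dF c) * snd dz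
             - F c (sub_angle x c) *
                 (- sin x / (sqrt (ksq c) * cos (sub_angle x c)) * fst dz
                  - sin (sub_angle x c) / (2 * c * (c - 1) * cos (sub_angle x c)) * snd dz)))
         (at (x, c))"
proof -
  have inner: "((\<lambda>z. (snd z, sub_angle (fst z) (snd z))) has_derivative
      (\<lambda>dz. (snd dz, - sin x / (sqrt (ksq c) * cos (sub_angle x c)) * fst dz
                     - sin (sub_angle x c) / (2 * c * (c - 1) * cos (sub_angle x c)) * snd dz)))
      (at (x, c))"
    by (intro has_derivative_Pair has_derivative_snd has_derivative_ident
        has_derivative_sub_angle[OF region])
  have "((\<lambda>(c, a). integral {a..pi/2} (F c)) has_derivative
      (\<lambda>(dc, da). integral {sub_angle x c..pi/2} (dF c) * dc - F c (sub_angle x c) * da))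
      (at (c, sub_angle x c))"
    using sub_angle_bounds[OF region] one_less_mult_sin_sq_imp[OF region]
    by (intro has_derivative_integral_lower_limit_param[OF _ _ contF dF contdF]) auto
  then have outer: "((\<lambda>(c, a). integral {a..pi/2} (F c)) has_derivative
      (\<lambda>(dc, da). integral {sub_angle x c..pi/2} (dF c) * dc - F c (sub_angle x c) * da))
      (at ((\<lambda>z. (snd z, sub_angle (fst z) (snd z))) (x, c)))"
    by simp
  show ?thesis
    using diff_chain_at[OF inner outer] by (simp add: o_def)
qed

lemma has_derivative_subst_integral:
  fixes F dF :: "real \<Rightarrow> real \<Rightarrow> real"
  assumes contF: "continuous_on ({1<..} \<times> {-pi/2..pi/2}) (\<lambda>(c, w). F c w)"
    and dF: "\<And>c w. 1 < c \<Longrightarrow> w \<in> {-pi/2..pi/2} \<Longrightarrow> ((\<lambda>c. F c w) has_field_derivative dF c w) (at c)"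
    and contdF: "continuous_on ({1<..} \<times> {-pi/2..pi/2}) (\<lambda>(c, w). dF c w)"
    and region: "1 < c * sin x ^ 2"
  shows "((\<lambda>z. subst_integral F (fst z) (snd z)) has_derivative
           (\<lambda>dz. F c (sub_angle x c) * sin x / sqrt (c * sin x ^ 2 - 1) * fst dz
                 + subst_integral_dc F dF x c * snd dz)) (at (x, c))"
proof -
  have c: "1 < c"
    by (rule one_less_mult_sin_sq_imp[OF region])
  define w where "w = sub_angle x c"
  define wx where "wx = - sin x / (sqrt (ksq c) * cos w)"
  define wc where "wc = - sin w / (2 * c * (c - 1) * cos w)"
  have numerator: "((\<lambda>z. integral {sub_angle (fst z) (snd z)..pi/2} (F (snd z))) has_derivative
      (\<lambda>dz. integral {w..pi/2} (dF c) * snd dz - F c w * (wx * fst dz + wc * snd dz))) (at (x, c))"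
    using has_derivative_integral_from_sub_angle[OF contF dF contdF region]
    by (rule has_derivative_eq_rhs) (simp_all add: fun_eq_iff wx_def wc_def w_def)
  have deriv: "((\<lambda>z. subst_integral F (fst z) (snd z)) has_derivative
      (\<lambda>dz. (integral {w..pi/2} (dF c) * snd dz - F c w * (wx * fst dz + wc * snd dz)) / sqrt c
        - integral {w..pi/2} (F c) * (snd dz / (2 * c * sqrt c)))) (at (x, c))"
    unfolding subst_integral_def w_def[symmetric]
    apply (rule has_derivative_eq_rhs)
     apply (rule derivative_eq_intros numerator refl | use c in \<open>simp add: w_def; fail\<close>)+
    using c by (simp add: fun_eq_iff field_simps w_def)
  have coeff_x: "- F c w * wx / sqrt c = F c w * sin x / sqrt (c * sin x ^ 2 - 1)"
    using cos_sub_angle[OF region] by (simp add: wx_def w_def mult.assoc)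
  have "cos w \<noteq> 0"
    using cos_sub_angle_pos[OF region] by (simp add: w_def)
  then show ?thesis
    unfolding subst_integral_dc_def w_def[symmetric] coeff_x[symmetric]
    by (intro has_derivative_eq_rhs[OF deriv])
      (use c in \<open>simp add: wc_def fun_eq_iff field_simps\<close>)
qed

lemma one_le_mult_sin_sq_between:
  assumes "0 < \<theta>" "\<theta> < pi" "1 < c * sin \<theta> ^ 2" "thetastar c \<le> x" "x \<le> \<theta>"
  shows "1 \<le> c * sin x ^ 2"
    and "x \<noteq> thetastar c \<Longrightarrow> 1 < c * sin x ^ 2"
proof -
  have c: "1 < c"
    by (rule one_less_mult_sin_sq_imp[OF assms(3)])
  have "\<theta> < pi - thetastar c"
    using one_less_mult_sin_sq_iff_thetastar(1)[OF c] assms by auto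
  moreover have "0 \<le> x"
    using thetastar_pos[OF c] assms by linarith
  ultimately show "1 \<le> c * sin x ^ 2" "x \<noteq> thetastar c \<Longrightarrow> 1 < c * sin x ^ 2"
    using one_less_mult_sin_sq_iff_thetastar[OF c, of x] assms by auto
qed

lemma has_integral_subst_integral:
  fixes F :: "real \<Rightarrow> real \<Rightarrow> real"
  assumes \<theta>: "0 < \<theta>" "\<theta> < pi" and region: "1 < c * sin \<theta> ^ 2"
    and contF: "continuous_on {-pi/2..pi/2} (F c)"
    and deriv: "\<And>v. thetastar c < v \<Longrightarrow> v < \<theta> \<Longrightarrow>
      ((\<lambda>x. subst_integral F x c) has_real_derivative f v) (at v)"
  shows "(f has_integral subst_integral F \<theta> c) {thetastar c..\<theta>}"
proof -
  have c: "1 < c"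
    by (rule one_less_mult_sin_sq_imp[OF region])
  have le: "thetastar c \<le> \<theta>"
    using one_less_mult_sin_sq_iff_thetastar(1)[OF c, of \<theta>] \<theta> region by auto
  have cont_sub: "continuous_on {thetastar c..\<theta>} (\<lambda>x. sub_angle x c)"
    using one_le_mult_sin_sq_between(1)[OF \<theta> region] by (intro continuous_on_sub_angle c) auto
  have range_sub: "(\<lambda>x. sub_angle x c) ` {thetastar c..\<theta>} \<subseteq> {-pi/2..pi/2}"
  proof (rule image_subsetI)
    fix x assume "x \<in> {thetastar c..\<theta>}"
    then have "\<bar>cos x / sqrt (ksq c)\<bar> \<le> 1"
      by (intro abs_cos_div_sqrt_ksq_le_1 c one_le_mult_sin_sq_between(1)[OF \<theta> region]) auto
    then have "- 1 \<le> cos x / sqrt (ksq c)" "cos x / sqrt (ksq c) \<le> 1"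
      unfolding abs_le_iff by linarith+
    from arcsin_bounded[OF this] show "sub_angle x c \<in> {-pi/2..pi/2}"
      by (simp add: sub_angle_def)
  qed
  have "continuous_on {-pi/2..pi/2} (\<lambda>a. integral {a..pi/2} (F c))"
    by (intro indefinite_integral_continuous_1' integrable_continuous_real contF)
  then have "continuous_on {thetastar c..\<theta>} (\<lambda>x. subst_integral F x c)"
    unfolding subst_integral_def
    using c by (intro continuous_intros continuous_on_compose2[OF _ cont_sub range_sub]) auto
  then have "(f has_integral (subst_integral F \<theta> c - subst_integral F (thetastar c) c))
      {thetastar c..\<theta>}"
    using deriv
    by (intro fundamental_theorem_of_calculus_interior[OF le])
      (auto simp: has_real_derivative_iff_has_vector_derivative)
  then show ?thesis
    using c by (simp add: subst_integral_def sub_angle_thetastar)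
qed

section \<open>The integrals A and B\<close>

lemma Aint_integrand_eq:
  assumes "0 < x" "x < pi" "1 < c * sin x ^ 2"
  shows "sqrt ((cot x ^ 2 + R ^ 2) / (c * sin x ^ 2 - 1))
    = Asub R c (sub_angle x c) * sin x / sqrt (c * sin x ^ 2 - 1)"
proof -
  have sin: "0 < sin x"
    using assms by (simp add: sin_gt_zero)
  have "cot x ^ 2 + R ^ 2 = gmet R x / sin x ^ 2"
    using sin by (simp add: cot_def gmet_def field_simps power_divide)
  then show ?thesis
    using sin
    by (simp add: Asub_def Bsub_def gmet_sub_sub_angle[OF assms(3)] real_sqrt_divide real_sqrt_mult
        power2_eq_square)
qed

lemma Bint_integrand_eq:
  assumes "1 < c * sin x ^ 2"
  shows "sqrt ((cos x ^ 2 + R ^ 2 * sin x ^ 2) / (c * sin x ^ 2 - 1)) * sin x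
    = Bsub R c (sub_angle x c) * sin x / sqrt (c * sin x ^ 2 - 1)"
  by (simp add: Bsub_def gmet_sub_sub_angle[OF assms] gmet_def real_sqrt_divide)

lemma has_derivative_subst_integral_Asub:
  assumes "0 < R" "0 < x" "x < pi" "1 < c * sin x ^ 2"
  shows "((\<lambda>z. subst_integral (Asub R) (fst z) (snd z)) has_derivative
           (\<lambda>dz. sqrt ((cot x ^ 2 + R ^ 2) / (c * sin x ^ 2 - 1)) * fst dz
                 + subst_integral_dc (Asub R) (Asub_dc R) x c * snd dz)) (at (x, c))"
  unfolding Aint_integrand_eq[OF assms(2-4)]
  by (rule has_derivative_subst_integral[OF continuous_on_Asub
        has_field_derivative_Asub[OF assms(1)] continuous_on_Asub_dc[OF assms(1)] assms(4)])

lemma has_derivative_subst_integral_Bsub: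
  assumes "0 < R" "1 < c * sin x ^ 2"
  shows "((\<lambda>z. subst_integral (Bsub R) (fst z) (snd z)) has_derivative
           (\<lambda>dz. sqrt ((cos x ^ 2 + R ^ 2 * sin x ^ 2) / (c * sin x ^ 2 - 1)) * sin x * fst dz
                 + subst_integral_dc (Bsub R) (Bsub_dc R) x c * snd dz)) (at (x, c))"
  unfolding Bint_integrand_eq[OF assms(2)]
  by (rule has_derivative_subst_integral[OF continuous_on_Bsub
        has_field_derivative_Bsub[OF assms(1)] continuous_on_Bsub_dc[OF assms(1)] assms(2)])

lemma
  assumes R: "0 < R" and \<theta>: "0 < \<theta>" "\<theta> < pi" and region: "1 < c * sin \<theta> ^ 2"
  shows Aint_eq_subst_integral: "Aint R \<theta> c = subst_integral (Asub R) \<theta> c"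
    and Bint_eq_subst_integral: "Bint R \<theta> c = subst_integral (Bsub R) \<theta> c"
proof -
  have c: "1 < c"
    by (rule one_less_mult_sin_sq_imp[OF region])
  have v: "0 < v" "v < pi" "1 < c * sin v ^ 2" if "thetastar c < v" "v < \<theta>" for v
    using thetastar_pos[OF c] that \<theta> one_le_mult_sin_sq_between(2)[OF \<theta> region, of v] by auto
  have "((\<lambda>v. sqrt ((cot v ^ 2 + R ^ 2) / (c * sin v ^ 2 - 1))) has_integral
      subst_integral (Asub R) \<theta> c) {thetastar c..\<theta>}"
    using DERIV_compose_binary[OF has_derivative_subst_integral_Asub[OF R v] DERIV_ident _
        DERIV_const]
    by (intro has_integral_subst_integral[where F="Asub R", OF \<theta> region
          continuous_on_slice[OF continuous_on_Asub c]]) auto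
  then show "Aint R \<theta> c = subst_integral (Asub R) \<theta> c"
    unfolding Aint_def by (rule integral_unique)
  have "((\<lambda>v. sqrt ((cos v ^ 2 + R ^ 2 * sin v ^ 2) / (c * sin v ^ 2 - 1)) * sin v) has_integral
      subst_integral (Bsub R) \<theta> c) {thetastar c..\<theta>}"
    using DERIV_compose_binary[OF has_derivative_subst_integral_Bsub[OF R v(3)] DERIV_ident _
        DERIV_const]
    by (intro has_integral_subst_integral[where F="Bsub R", OF \<theta> region
          continuous_on_slice[OF continuous_on_Bsub c]]) auto
  then show "Bint R \<theta> c = subst_integral (Bsub R) \<theta> c"
    unfolding Bint_def by (rule integral_unique)
qed

(* The derivative of dc_primitive, with S = Bsub R c w, D = sinsq_sub c w, s = sin w,
   co = cos w and k = ksq c. *)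
lemma primitive_derivative_identity:
  fixes S D s co k c R :: real
  assumes nz: "S \<noteq> 0" "D \<noteq> 0" "c \<noteq> 0"
    and rel: "S ^ 2 = R ^ 2 - (R ^ 2 - 1) * k * s ^ 2" "co ^ 2 = 1 - s ^ 2" "k * c = c - 1"
      "D = 1 - k * s ^ 2"
  shows "- (((- (R ^ 2 - 1) * k * s * co / S) * s * co + S * (co ^ 2 - s ^ 2)) * D
             - S * s * co * (- 2 * k * s * co)) / (2 * c * D ^ 2)
    = - ((R ^ 2 - 1) * s ^ 2 / c ^ 2) / (2 * S) / D + S * (s ^ 2 / c ^ 2) / D ^ 2 - S / D / (2 * c)
      - c * (- ((R ^ 2 - 1) * s ^ 2 / c ^ 2) / (2 * S))"
  (is "?lhs = ?rhs")
proof -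
  define Y where "Y = (- (R ^ 2 - 1) * k * s ^ 2 * co ^ 2 + S ^ 2 * (co ^ 2 - s ^ 2)) * D
    + 2 * k * S ^ 2 * s ^ 2 * co ^ 2"
  define Z where "Z = (R ^ 2 - 1) * s ^ 2 * D - 2 * S ^ 2 * s ^ 2 + c * S ^ 2 * D
    - (R ^ 2 - 1) * c * s ^ 2 * D ^ 2"
  have "c * Y = Z"
    unfolding Y_def Z_def using rel by algebra
  have "?lhs = - (c * Y) / (2 * c ^ 2 * S * D ^ 2)"
    unfolding Y_def using nz by (simp add: field_simps power2_eq_square)
  also have "\<dots> = ?rhs"
    unfolding \<open>c * Y = Z\<close> Z_def using nz by (simp add: field_simps power2_eq_square)
  finally show ?thesis .
qed

definition dc_primitive :: "real \<Rightarrow> real \<Rightarrow> real \<Rightarrow> real" where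
  "dc_primitive R c w = - (Bsub R c w * sin w * cos w) / (2 * c * sinsq_sub c w)"

lemma has_real_derivative_dc_primitive:
  assumes "0 < R" "1 < c"
  shows "((\<lambda>w. dc_primitive R c w) has_real_derivative
           Asub_dc R c w - Asub R c w / (2 * c) - c * Bsub_dc R c w) (at w)"
proof -
  let ?S = "Bsub R c w" and ?D = "sinsq_sub c w" and ?k = "ksq c"
  have S_pos: "0 < ?S" and D_pos: "0 < ?D"
    using Bsub_pos[OF assms] sinsq_sub_pos[OF assms(2)] by auto
  have dS: "((\<lambda>w. Bsub R c w) has_real_derivative - (R ^ 2 - 1) * ?k * sin w * cos w / ?S) (at w)"
    unfolding Bsub_def gmet_sub_def
    apply (rule DERIV_cong)
     apply (rule derivative_eq_intros refl
        | use gmet_sub_pos[OF assms, of w] in \<open>simp add: gmet_sub_def; fail\<close>)+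
    using gmet_sub_pos[OF assms, of w] by (simp add: gmet_sub_def field_simps)
  have dD: "((\<lambda>w. sinsq_sub c w) has_real_derivative - 2 * ?k * sin w * cos w) (at w)"
    unfolding sinsq_sub_def by (rule DERIV_cong, (rule derivative_eq_intros refl)+) auto
  let ?d = "- (((- (R ^ 2 - 1) * ?k * sin w * cos w / ?S) * sin w * cos w
      + ?S * (cos w ^ 2 - sin w ^ 2)) * ?D - ?S * sin w * cos w * (- 2 * ?k * sin w * cos w))
      / (2 * c * ?D ^ 2)"
  have "((\<lambda>w. dc_primitive R c w) has_real_derivative ?d) (at w)"
    unfolding dc_primitive_def
    apply (rule DERIV_cong)
     apply (rule derivative_eq_intros dS dD refl | use assms D_pos in \<open>simp; fail\<close>)+
    using assms D_pos S_pos by (simp add: field_simps power2_eq_square)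
  moreover have "?d = Asub_dc R c w - Asub R c w / (2 * c) - c * Bsub_dc R c w"
    unfolding Asub_dc_def Asub_def Bsub_dc_def
  proof (rule primitive_derivative_identity)
    show "?S ^ 2 = R ^ 2 - (R ^ 2 - 1) * ?k * sin w ^ 2"
      using gmet_sub_pos[OF assms, of w] by (simp add: Bsub_def gmet_sub_def)
    show "?k * c = c - 1"
      using assms by (simp add: ksq_def field_simps)
  qed (use S_pos D_pos assms in \<open>auto simp: sinsq_sub_def cos_squared_eq\<close>)
  ultimately show ?thesis
    by (rule DERIV_cong)
qed

(* IA, IAc, IB, IBc stand for the integrals of Asub, Asub_dc, Bsub, Bsub_dc from sub_angle x c
   to pi/2, and q for sqrt c. *)
lemma boundary_terms_identity:
  fixes IA IAc IB IBc S D s co c q :: real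
  assumes nz: "q \<noteq> 0" "co \<noteq> 0" "D \<noteq> 0" "1 < c"
    and D: "c * D = 1 + (c - 1) * co ^ 2"
    and key: "IAc - IA / (2 * c) - c * IBc = S * s * co / (2 * c * D)"
  shows "IB / q = 2 * ((IAc + S / D * s / (2 * c * (c - 1) * co)) / q - IA / (2 * c * q)
     - c * ((IBc + S * s / (2 * c * (c - 1) * co)) / q - IB / (2 * c * q)))"
proof -
  define W where "W = s / (2 * c * (c - 1) * co)"
  have "2 * ((IAc + S / D * W) / q - IA / (2 * c * q) - c * ((IBc + S * W) / q - IB / (2 * c * q)))
    = (2 * (IAc - IA / (2 * c) - c * IBc) + IB + 2 * S * W * (1 / D - c)) / q"
    using nz by (simp add: field_simps)
  also have "2 * S * W * (1 / D - c) = - (S * s * co / (c * D))"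
  proof -
    have "1 / D - c = (1 - c * D) / D"
      using nz by (simp add: field_simps)
    also have "1 - c * D = - ((c - 1) * co ^ 2)"
      using D by simp
    finally have factor: "1 / D - c = - ((c - 1) * co ^ 2) / D" .
    show ?thesis
      unfolding factor W_def using nz by (simp add: field_simps power2_eq_square)
  qed
  also have "2 * (IAc - IA / (2 * c) - c * IBc) = S * s * co / (c * D)"
    unfolding key using nz by (simp add: field_simps)
  finally show ?thesis
    by (simp add: W_def)
qed

(* This is B = 2 (\<partial>A/\<partial>C - C \<partial>B/\<partial>C). The integrals on the right combine into the integral
   of an exact derivative (has_real_derivative_dc_primitive); what is left are boundary terms at the
   lower limit, and these cancel. *)
lemma subst_integral_Bsub_eq:
  assumes R: "0 < R" and region: "1 < c * sin x ^ 2"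
  shows "subst_integral (Bsub R) x c
    = 2 * (subst_integral_dc (Asub R) (Asub_dc R) x c
           - c * subst_integral_dc (Bsub R) (Bsub_dc R) x c)"
proof -
  have c: "1 < c"
    by (rule one_less_mult_sin_sq_imp[OF region])
  define w where "w = sub_angle x c"
  have w: "- pi / 2 < w" "w < pi / 2"
    using sub_angle_bounds[OF region] by (simp_all add: w_def)
  have integral_slice: "(F c has_integral integral {w..pi/2} (F c)) {w..pi/2}"
    if "continuous_on ({1<..} \<times> UNIV) (\<lambda>(c, w). F c w)" for F :: "real \<Rightarrow> real \<Rightarrow> real"
  proof -
    have "continuous_on {w..pi/2} (F c)"
      using continuous_on_slice[OF that c] by (rule continuous_on_subset) auto
    from integrable_continuous_real[OF this] show ?thesis
      by (rule integrable_integral)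
  qed
  have "((\<lambda>w. Asub_dc R c w - Asub R c w / (2 * c) - c * Bsub_dc R c w) has_integral
      integral {w..pi/2} (Asub_dc R c) - integral {w..pi/2} (Asub R c) / (2 * c)
        - c * integral {w..pi/2} (Bsub_dc R c)) {w..pi/2}"
    by (intro has_integral_diff has_integral_divide has_integral_mult_right integral_slice
        continuous_on_Asub continuous_on_Asub_dc[OF R] continuous_on_Bsub_dc[OF R])
  moreover have "((\<lambda>w. Asub_dc R c w - Asub R c w / (2 * c) - c * Bsub_dc R c w) has_integral
      dc_primitive R c (pi / 2) - dc_primitive R c w) {w..pi/2}"
    using w has_real_derivative_dc_primitive[OF R c]
    by (intro fundamental_theorem_of_calculus)
      (auto simp: has_real_derivative_iff_has_vector_derivative
        intro: has_vector_derivative_at_within)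
  ultimately have key: "integral {w..pi/2} (Asub_dc R c) - integral {w..pi/2} (Asub R c) / (2 * c)
      - c * integral {w..pi/2} (Bsub_dc R c) = Bsub R c w * sin w * cos w / (2 * c * sinsq_sub c w)"
    by (simp add: has_integral_unique dc_primitive_def)
  have "c * sinsq_sub c w = 1 + (c - 1) * cos w ^ 2"
    using c by (simp add: sinsq_sub_def ksq_def sin_squared_eq field_simps)
  moreover have "cos w \<noteq> 0"
    using cos_sub_angle_pos[OF region] by (simp add: w_def)
  ultimately show ?thesis
    unfolding subst_integral_def subst_integral_dc_def w_def[symmetric] Asub_def[of R c w]
    using c sinsq_sub_pos[OF c, of w] by (intro boundary_terms_identity key) auto
qed

section \<open>Partial derivatives of observables\<close>

definition has_partials :: "obs \<Rightarrow> real \<Rightarrow> real \<Rightarrow> real \<Rightarrow> real \<Rightarrow>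
    real \<Rightarrow> real \<Rightarrow> real \<Rightarrow> real \<Rightarrow> real \<Rightarrow> bool" where
  "has_partials f f\<^sub>\<phi> f\<^sub>\<theta> f\<^sub>p f\<^sub>q t \<phi> \<theta> p q \<longleftrightarrow>
     ((\<lambda>x. f t x \<theta> p q) has_real_derivative f\<^sub>\<phi>) (at \<phi>) \<and>
     ((\<lambda>x. f t \<phi> x p q) has_real_derivative f\<^sub>\<theta>) (at \<theta>) \<and>
     ((\<lambda>x. f t \<phi> \<theta> x q) has_real_derivative f\<^sub>p) (at p) \<and>
     ((\<lambda>x. f t \<phi> \<theta> p x) has_real_derivative f\<^sub>q) (at q)"

lemma poisson_eq_partials:
  assumes "has_partials f f\<^sub>\<phi> f\<^sub>\<theta> f\<^sub>p f\<^sub>q t \<phi> \<theta> p q"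
    and "has_partials g g\<^sub>\<phi> g\<^sub>\<theta> g\<^sub>p g\<^sub>q t \<phi> \<theta> p q"
  shows "poisson f g t \<phi> \<theta> p q = f\<^sub>\<phi> * g\<^sub>p - f\<^sub>p * g\<^sub>\<phi> + f\<^sub>\<theta> * g\<^sub>q - f\<^sub>q * g\<^sub>\<theta>"
  using assms unfolding has_partials_def poisson_def d_phi_def d_theta_def d_pphi_def d_ptheta_def
  by (auto dest!: DERIV_imp_deriv)

lemma has_partials_const: "has_partials (\<lambda>t \<phi> \<theta> p q. k) 0 0 0 0 t \<phi> \<theta> p q"
  and has_partials_time: "has_partials (\<lambda>t \<phi> \<theta> p q. t) 0 0 0 0 t \<phi> \<theta> p q"
  and has_partials_phi: "has_partials (\<lambda>t \<phi> \<theta> p q. \<phi>) 1 0 0 0 t \<phi> \<theta> p q"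
  and has_partials_pphi: "has_partials (\<lambda>t \<phi> \<theta> p q. p) 0 0 1 0 t \<phi> \<theta> p q"
  by (simp_all add: has_partials_def)

lemma has_partials_cong:
  "has_partials f f\<^sub>\<phi> f\<^sub>\<theta> f\<^sub>p f\<^sub>q t \<phi> \<theta> p q \<Longrightarrow> f\<^sub>\<phi> = g\<^sub>\<phi> \<Longrightarrow> f\<^sub>\<theta> = g\<^sub>\<theta> \<Longrightarrow> f\<^sub>p = g\<^sub>p \<Longrightarrow>
    f\<^sub>q = g\<^sub>q \<Longrightarrow> has_partials f g\<^sub>\<phi> g\<^sub>\<theta> g\<^sub>p g\<^sub>q t \<phi> \<theta> p q"
  by simp

lemma has_partials_diff:
  assumes "has_partials f f\<^sub>\<phi> f\<^sub>\<theta> f\<^sub>p f\<^sub>q t \<phi> \<theta> p q"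
    and "has_partials g g\<^sub>\<phi> g\<^sub>\<theta> g\<^sub>p g\<^sub>q t \<phi> \<theta> p q"
  shows "has_partials (\<lambda>t \<phi> \<theta> p q. f t \<phi> \<theta> p q - g t \<phi> \<theta> p q)
           (f\<^sub>\<phi> - g\<^sub>\<phi>) (f\<^sub>\<theta> - g\<^sub>\<theta>) (f\<^sub>p - g\<^sub>p) (f\<^sub>q - g\<^sub>q) t \<phi> \<theta> p q"
  using assms unfolding has_partials_def by (auto intro!: DERIV_diff)

lemma has_partials_mult:
  assumes "has_partials f f\<^sub>\<phi> f\<^sub>\<theta> f\<^sub>p f\<^sub>q t \<phi> \<theta> p q"
    and "has_partials g g\<^sub>\<phi> g\<^sub>\<theta> g\<^sub>p g\<^sub>q t \<phi> \<theta> p q"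
  shows "has_partials (\<lambda>t \<phi> \<theta> p q. f t \<phi> \<theta> p q * g t \<phi> \<theta> p q)
           (f\<^sub>\<phi> * g t \<phi> \<theta> p q + g\<^sub>\<phi> * f t \<phi> \<theta> p q)
           (f\<^sub>\<theta> * g t \<phi> \<theta> p q + g\<^sub>\<theta> * f t \<phi> \<theta> p q)
           (f\<^sub>p * g t \<phi> \<theta> p q + g\<^sub>p * f t \<phi> \<theta> p q)
           (f\<^sub>q * g t \<phi> \<theta> p q + g\<^sub>q * f t \<phi> \<theta> p q) t \<phi> \<theta> p q"
  using assms unfolding has_partials_def by (auto intro!: DERIV_mult)

lemma has_partials_inverse:
  assumes "has_partials f f\<^sub>\<phi> f\<^sub>\<theta> f\<^sub>p f\<^sub>q t \<phi> \<theta> p q" "f t \<phi> \<theta> p q \<noteq> 0"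
  shows "has_partials (\<lambda>t \<phi> \<theta> p q. inverse (f t \<phi> \<theta> p q))
           (- f\<^sub>\<phi> / f t \<phi> \<theta> p q ^ 2) (- f\<^sub>\<theta> / f t \<phi> \<theta> p q ^ 2)
           (- f\<^sub>p / f t \<phi> \<theta> p q ^ 2) (- f\<^sub>q / f t \<phi> \<theta> p q ^ 2) t \<phi> \<theta> p q"
  using assms unfolding has_partials_def
  by (auto intro!: derivative_eq_intros simp: power2_eq_square field_simps)

lemma has_partials_compose_theta:
  assumes G: "((\<lambda>z. G (fst z) (snd z)) has_derivative (\<lambda>dz. G\<^sub>\<theta> * fst dz + G\<^sub>c * snd dz))
      (at (\<theta>, c t \<phi> \<theta> p q))"
    and "has_partials c c\<^sub>\<phi> c\<^sub>\<theta> c\<^sub>p c\<^sub>q t \<phi> \<theta> p q"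
  shows "has_partials (\<lambda>t \<phi> \<theta> p q. G \<theta> (c t \<phi> \<theta> p q))
           (G\<^sub>c * c\<^sub>\<phi>) (G\<^sub>\<theta> + G\<^sub>c * c\<^sub>\<theta>) (G\<^sub>c * c\<^sub>p) (G\<^sub>c * c\<^sub>q) t \<phi> \<theta> p q"
proof -
  from assms(2) have c:
    "((\<lambda>x. c t x \<theta> p q) has_real_derivative c\<^sub>\<phi>) (at \<phi>)"
    "((\<lambda>x. c t \<phi> x p q) has_real_derivative c\<^sub>\<theta>) (at \<theta>)"
    "((\<lambda>x. c t \<phi> \<theta> x q) has_real_derivative c\<^sub>p) (at p)"
    "((\<lambda>x. c t \<phi> \<theta> p x) has_real_derivative c\<^sub>q) (at q)"
    unfolding has_partials_def by auto
  show ?thesis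
    unfolding has_partials_def
    using DERIV_compose_binary[OF G DERIV_const[of \<theta>] _ c(1)]
      DERIV_compose_binary[OF G DERIV_ident _ c(2)]
      DERIV_compose_binary[OF G DERIV_const[of \<theta>] _ c(3)]
      DERIV_compose_binary[OF G DERIV_const[of \<theta>] _ c(4)]
    by simp
qed

lemma has_partials_cong_quadrant:
  assumes g: "has_partials g g\<^sub>\<phi> g\<^sub>\<theta> g\<^sub>p g\<^sub>q t \<phi> \<theta> p q"
    and \<theta>: "0 < \<theta>" "\<theta> < pi" and p: "p \<noteq> 0" and q: "q \<noteq> 0"
    and eq: "\<And>x y p' q'. 0 < y \<Longrightarrow> y < pi \<Longrightarrow> p' \<noteq> 0 \<Longrightarrow> q' \<noteq> 0 \<Longrightarrow>
      sgn p' = sgn p \<Longrightarrow> sgn q' = sgn q \<Longrightarrow> f t x y p' q' = g t x y p' q'"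
  shows "has_partials f g\<^sub>\<phi> g\<^sub>\<theta> g\<^sub>p g\<^sub>q t \<phi> \<theta> p q"
proof -
  have same_sgn: "sgn y = sgn z" "y \<noteq> 0" if "0 < y * z" for y z :: real
    using that by (auto simp: zero_less_mult_iff sgn_if)
  have open_same_sgn: "open {y. 0 < y * z}" for z :: real
    by (intro open_Collect_less continuous_intros)
  have in_same_sgn: "z \<in> {y. 0 < y * z}" if "z \<noteq> 0" for z :: real
    using that not_real_square_gt_zero by blast
  from g have g:
    "((\<lambda>x. g t x \<theta> p q) has_real_derivative g\<^sub>\<phi>) (at \<phi>)"
    "((\<lambda>x. g t \<phi> x p q) has_real_derivative g\<^sub>\<theta>) (at \<theta>)"
    "((\<lambda>x. g t \<phi> \<theta> x q) has_real_derivative g\<^sub>p) (at p)"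
    "((\<lambda>x. g t \<phi> \<theta> p x) has_real_derivative g\<^sub>q) (at q)"
    unfolding has_partials_def by auto
  have "((\<lambda>x. f t x \<theta> p q) has_real_derivative g\<^sub>\<phi>) (at \<phi>)"
    using g(1) \<theta> p q eq by simp
  moreover have "((\<lambda>x. f t \<phi> x p q) has_real_derivative g\<^sub>\<theta>) (at \<theta>)"
    by (rule has_field_derivative_transform_within_open[OF g(2), where S="{0<..<pi}"])
      (use \<theta> p q eq in auto)
  moreover have "((\<lambda>x. f t \<phi> \<theta> x q) has_real_derivative g\<^sub>p) (at p)"
    by (rule has_field_derivative_transform_within_open[OF g(3) open_same_sgn in_same_sgn[OF p]])
      (use \<theta> p q eq same_sgn in auto)
  moreover have "((\<lambda>x. f t \<phi> \<theta> p x) has_real_derivative g\<^sub>q) (at q)"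
    by (rule has_field_derivative_transform_within_open[OF g(4) open_same_sgn in_same_sgn[OF q]])
      (use \<theta> p q eq same_sgn in auto)
  ultimately show ?thesis
    unfolding has_partials_def by blast
qed

lemma gmet_pos:
  assumes "0 < R"
  shows "0 < gmet R \<theta>"
proof (cases "sin \<theta> = 0")
  case True
  then have "cos \<theta> ^ 2 = 1"
    using sin_cos_squared_add[of \<theta>] by simp
  then show ?thesis
    by (simp add: gmet_def True)
next
  case False
  then show ?thesis
    using assms by (simp add: gmet_def add_nonneg_pos)
qed

lemma sin_nonzero: "0 < x \<Longrightarrow> x < pi \<Longrightarrow> sin x \<noteq> 0"
  using sin_gt_zero[of x] by simp

lemma has_real_derivative_gmet:
  "((\<lambda>\<theta>. gmet R \<theta>) has_real_derivative 2 * (R ^ 2 - 1) * sin \<theta> * cos \<theta>) (at \<theta>)"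
  unfolding gmet_def by (auto intro!: derivative_eq_intros simp: algebra_simps)

lemma Lobs_eq: "sin \<theta> \<noteq> 0 \<Longrightarrow> Lobs t \<phi> \<theta> p q = p"
  by (simp add: Lobs_def phidot_def)

lemma Eobs_eq:
  "0 < R \<Longrightarrow> sin \<theta> \<noteq> 0 \<Longrightarrow> Eobs R t \<phi> \<theta> p q = (p ^ 2 / sin \<theta> ^ 2 + q ^ 2 / gmet R \<theta>) / 2"
  using gmet_pos[of R \<theta>]
  by (simp add: Eobs_def lagr_def phidot_def thetadot_def power_divide field_simps power2_eq_square)

lemma Cobs_eq:
  "0 < R \<Longrightarrow> sin \<theta> \<noteq> 0 \<Longrightarrow> p \<noteq> 0 \<Longrightarrow>
    Cobs R t \<phi> \<theta> p q = 1 / sin \<theta> ^ 2 + q ^ 2 / (gmet R \<theta> * p ^ 2)"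
  using gmet_pos[of R \<theta>] by (simp add: Cobs_def Lobs_eq Eobs_eq field_simps)

lemma sobs_eq: "0 < R \<Longrightarrow> sin \<theta> \<noteq> 0 \<Longrightarrow> sobs R t \<phi> \<theta> p q = sgn q * sgn p"
  using gmet_pos[of R \<theta>] by (simp add: sobs_def Lobs_eq thetadot_def sgn_divide)

lemma one_less_Cobs_mult_sin_sq:
  assumes "0 < R" "sin \<theta> \<noteq> 0" "p \<noteq> 0" "q \<noteq> 0"
  shows "1 < Cobs R t \<phi> \<theta> p q * sin \<theta> ^ 2"
proof -
  have "Cobs R t \<phi> \<theta> p q * sin \<theta> ^ 2 = 1 + q ^ 2 * sin \<theta> ^ 2 / (gmet R \<theta> * p ^ 2)"
    using assms by (simp add: Cobs_eq field_simps)
  moreover have "0 < q ^ 2 * sin \<theta> ^ 2 / (gmet R \<theta> * p ^ 2)"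
    using assms gmet_pos[of R \<theta>] by simp
  ultimately show ?thesis
    by simp
qed

lemma
  assumes "0 < R" "0 < \<theta>" "\<theta> < pi" "p \<noteq> 0" "q \<noteq> 0"
  shows Thetaobs_eq: "Thetaobs R t \<phi> \<theta> p q
      = \<phi> - sobs R t \<phi> \<theta> p q * subst_integral (Asub R) \<theta> (Cobs R t \<phi> \<theta> p q)"
    and Tobs_eq: "Tobs R t \<phi> \<theta> p q
      = t - sobs R t \<phi> \<theta> p q * inverse (Lobs t \<phi> \<theta> p q)
          * subst_integral (Bsub R) \<theta> (Cobs R t \<phi> \<theta> p q)"
proof -
  have region: "1 < Cobs R t \<phi> \<theta> p q * sin \<theta> ^ 2"
    using assms sin_nonzero by (intro one_less_Cobs_mult_sin_sq) auto
  show "Thetaobs R t \<phi> \<theta> p q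
      = \<phi> - sobs R t \<phi> \<theta> p q * subst_integral (Asub R) \<theta> (Cobs R t \<phi> \<theta> p q)"
    using Aint_eq_subst_integral[OF assms(1-3) region] by (simp add: Thetaobs_def)
  show "Tobs R t \<phi> \<theta> p q
      = t - sobs R t \<phi> \<theta> p q * inverse (Lobs t \<phi> \<theta> p q)
          * subst_integral (Bsub R) \<theta> (Cobs R t \<phi> \<theta> p q)"
    using Bint_eq_subst_integral[OF assms(1-3) region] by (simp add: Tobs_def)
qed

(* p and q are the momenta pphi and ptheta. *)
locale spheroid_phase_point =
  fixes R t \<phi> \<theta> p q :: real
  assumes R_pos: "0 < R" and theta_pos: "0 < \<theta>" and theta_less_pi: "\<theta> < pi"
    and p_nonzero: "p \<noteq> 0" and q_nonzero: "q \<noteq> 0"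
begin

definition "sgn_qp = sgn q * sgn p"
definition "C0 = Cobs R t \<phi> \<theta> p q"
definition "E_theta = - (p ^ 2 * cos \<theta> / sin \<theta> ^ 3)
  - q ^ 2 * (R ^ 2 - 1) * sin \<theta> * cos \<theta> / gmet R \<theta> ^ 2"
definition "C_theta = 2 * E_theta / p ^ 2"
definition "C_p = - (2 * q ^ 2 / (gmet R \<theta> * p ^ 3))"
definition "C_q = 2 * q / (gmet R \<theta> * p ^ 2)"
definition "A_theta = sqrt ((cot \<theta> ^ 2 + R ^ 2) / (C0 * sin \<theta> ^ 2 - 1))"
definition "A_C = subst_integral_dc (Asub R) (Asub_dc R) \<theta> C0"
definition "B0 = subst_integral (Bsub R) \<theta> C0"
definition "B_theta = sqrt ((cos \<theta> ^ 2 + R ^ 2 * sin \<theta> ^ 2) / (C0 * sin \<theta> ^ 2 - 1)) * sin \<theta>"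
definition "B_C = subst_integral_dc (Bsub R) (Bsub_dc R) \<theta> C0"

lemma sin_theta_pos: "0 < sin \<theta>"
  using theta_pos theta_less_pi by (simp add: sin_gt_zero)

lemma gmet_theta_pos: "0 < gmet R \<theta>"
  using R_pos by (rule gmet_pos)

lemma one_less_C0_mult_sin_sq: "1 < C0 * sin \<theta> ^ 2"
  unfolding C0_def using R_pos sin_theta_pos p_nonzero q_nonzero
  by (intro one_less_Cobs_mult_sin_sq) auto

lemma has_partials_Lobs: "has_partials Lobs 0 0 1 0 t \<phi> \<theta> p q"
  using has_partials_pphi theta_pos theta_less_pi p_nonzero q_nonzero
  by (rule has_partials_cong_quadrant) (simp add: Lobs_eq sin_nonzero)

lemma has_partials_sobs: "has_partials (sobs R) 0 0 0 0 t \<phi> \<theta> p q"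
  using has_partials_const[of "sgn q * sgn p"] theta_pos theta_less_pi p_nonzero q_nonzero
  by (rule has_partials_cong_quadrant) (simp add: sobs_eq R_pos sin_nonzero)

lemma has_partials_Eobs:
  "has_partials (Eobs R) 0 E_theta (p / sin \<theta> ^ 2) (q / gmet R \<theta>) t \<phi> \<theta> p q"
proof (rule has_partials_cong_quadrant[OF _ theta_pos theta_less_pi p_nonzero q_nonzero])
  show "Eobs R t x y p' q' = (p' ^ 2 / sin y ^ 2 + q' ^ 2 / gmet R y) / 2"
    if "0 < y" "y < pi" for x y p' q'
    using that by (simp add: Eobs_eq R_pos sin_nonzero)
  show "has_partials (\<lambda>t x y p q. (p ^ 2 / sin y ^ 2 + q ^ 2 / gmet R y) / 2)
      0 E_theta (p / sin \<theta> ^ 2) (q / gmet R \<theta>) t \<phi> \<theta> p q"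
    unfolding has_partials_def E_theta_def
    using sin_theta_pos gmet_theta_pos
    by (auto intro!: derivative_eq_intros has_real_derivative_gmet
        simp: field_simps power2_eq_square power3_eq_cube)
qed

lemma has_partials_Cobs: "has_partials (Cobs R) 0 C_theta C_p C_q t \<phi> \<theta> p q"
proof (rule has_partials_cong_quadrant[OF _ theta_pos theta_less_pi p_nonzero q_nonzero])
  show "Cobs R t x y p' q' = 1 / sin y ^ 2 + q' ^ 2 / (gmet R y * p' ^ 2)"
    if "0 < y" "y < pi" "p' \<noteq> 0" for x y p' q'
    using that by (simp add: Cobs_eq R_pos sin_nonzero)
  show "has_partials (\<lambda>t x y p q. 1 / sin y ^ 2 + q ^ 2 / (gmet R y * p ^ 2))
      0 C_theta C_p C_q t \<phi> \<theta> p q"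
    unfolding has_partials_def C_theta_def E_theta_def C_p_def C_q_def
    using sin_theta_pos gmet_theta_pos p_nonzero
    by (auto intro!: derivative_eq_intros has_real_derivative_gmet
        simp: field_simps power2_eq_square power3_eq_cube)
qed

lemma has_derivative_A:
  "((\<lambda>z. subst_integral (Asub R) (fst z) (snd z)) has_derivative
     (\<lambda>dz. A_theta * fst dz + A_C * snd dz)) (at (\<theta>, Cobs R t \<phi> \<theta> p q))"
  unfolding A_theta_def A_C_def C0_def[symmetric]
  using R_pos theta_pos theta_less_pi one_less_C0_mult_sin_sq
  by (rule has_derivative_subst_integral_Asub)

lemma has_derivative_B:
  "((\<lambda>z. subst_integral (Bsub R) (fst z) (snd z)) has_derivative
     (\<lambda>dz. B_theta * fst dz + B_C * snd dz)) (at (\<theta>, Cobs R t \<phi> \<theta> p q))"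
  unfolding B_theta_def B_C_def C0_def[symmetric]
  using R_pos one_less_C0_mult_sin_sq by (rule has_derivative_subst_integral_Bsub)

lemma has_partials_Thetaobs:
  "has_partials (Thetaobs R) 1 (- sgn_qp * (A_theta + A_C * C_theta)) (- sgn_qp * A_C * C_p)
     (- sgn_qp * A_C * C_q) t \<phi> \<theta> p q"
proof -
  note Theta = has_partials_diff[OF has_partials_phi has_partials_mult[OF has_partials_sobs
    has_partials_compose_theta[where c="Cobs R", OF has_derivative_A has_partials_Cobs]]]
  show ?thesis
    by (rule has_partials_cong[OF has_partials_cong_quadrant[where f="Thetaobs R",
          OF Theta theta_pos theta_less_pi p_nonzero q_nonzero]])
      (use R_pos in \<open>simp_all add: Thetaobs_eq sobs_eq sin_nonzero theta_pos theta_less_pi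
        sgn_qp_def\<close>)
qed

lemma has_partials_Tobs:
  "has_partials (Tobs R) 0 (- sgn_qp * (B_theta + B_C * C_theta) / p)
     (sgn_qp * B0 / p ^ 2 - sgn_qp * B_C * C_p / p) (- sgn_qp * B_C * C_q / p) t \<phi> \<theta> p q"
proof -
  have L: "Lobs t \<phi> \<theta> p q \<noteq> 0"
    using p_nonzero by (simp add: Lobs_eq sin_nonzero theta_pos theta_less_pi)
  note T = has_partials_diff[OF has_partials_time has_partials_mult[OF
    has_partials_mult[OF has_partials_sobs has_partials_inverse[OF has_partials_Lobs L]]
    has_partials_compose_theta[where c="Cobs R", OF has_derivative_B has_partials_Cobs]]]
  show ?thesis
    by (rule has_partials_cong[OF has_partials_cong_quadrant[where f="Tobs R",
          OF T theta_pos theta_less_pi p_nonzero q_nonzero]])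
      (use R_pos p_nonzero in \<open>simp_all add: Tobs_eq sobs_eq Lobs_eq sin_nonzero theta_pos
        theta_less_pi sgn_qp_def B0_def C0_def field_simps power2_eq_square\<close>)
qed

lemma C0_eq: "C0 = 1 / sin \<theta> ^ 2 + q ^ 2 / (gmet R \<theta> * p ^ 2)"
  using R_pos sin_theta_pos p_nonzero by (simp add: C0_def Cobs_eq)

lemma C0_mult_sin_sq_minus_1: "C0 * sin \<theta> ^ 2 - 1 = q ^ 2 * sin \<theta> ^ 2 / (gmet R \<theta> * p ^ 2)"
  using sin_theta_pos p_nonzero gmet_theta_pos by (simp add: C0_eq field_simps power2_eq_square)

lemma A_theta_eq: "A_theta = sgn_qp * (gmet R \<theta> * p / (sin \<theta> ^ 2 * q))"
proof -
  have cot: "cot \<theta> ^ 2 + R ^ 2 = gmet R \<theta> / sin \<theta> ^ 2"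
    using sin_theta_pos by (simp add: cot_def gmet_def field_simps power_divide)
  have "A_theta = sqrt ((gmet R \<theta> * p / (sin \<theta> ^ 2 * q)) ^ 2)"
    unfolding A_theta_def C0_mult_sin_sq_minus_1 cot
    using sin_theta_pos p_nonzero q_nonzero by (simp add: field_simps power2_eq_square)
  then show ?thesis
    using gmet_theta_pos sin_theta_pos p_nonzero q_nonzero
    by (simp add: sgn_qp_def abs_mult abs_divide sgn_if)
qed

lemma B_theta_eq: "B_theta = sgn_qp * (gmet R \<theta> * p / q)"
proof -
  have "B_theta = sqrt ((gmet R \<theta> * p / (sin \<theta> * q)) ^ 2) * sin \<theta>"
    unfolding B_theta_def C0_mult_sin_sq_minus_1
    using sin_theta_pos p_nonzero q_nonzero by (simp add: gmet_def field_simps power2_eq_square)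
  then show ?thesis
    using gmet_theta_pos sin_theta_pos p_nonzero q_nonzero
    by (simp add: sgn_qp_def abs_mult abs_divide sgn_if)
qed

lemma sgn_qp_cases: "sgn_qp = 1 \<or> sgn_qp = -1"
  using p_nonzero q_nonzero by (auto simp: sgn_qp_def sgn_if)

lemma B0_eq: "B0 = 2 * (A_C - C0 * B_C)"
  unfolding B0_def A_C_def B_C_def using R_pos one_less_C0_mult_sin_sq
  by (rule subst_integral_Bsub_eq)

lemma poisson_Eobs_Lobs: "poisson (Eobs R) Lobs t \<phi> \<theta> p q = 0"
  by (simp add: poisson_eq_partials[OF has_partials_Eobs has_partials_Lobs])

lemma poisson_Eobs_Thetaobs: "poisson (Eobs R) (Thetaobs R) t \<phi> \<theta> p q = 0"
  using sgn_qp_cases gmet_theta_pos sin_theta_pos p_nonzero q_nonzero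
  by (auto simp: poisson_eq_partials[OF has_partials_Eobs has_partials_Thetaobs]
      A_theta_eq C_theta_def C_q_def field_simps)

lemma poisson_Eobs_Tobs: "poisson (Eobs R) (Tobs R) t \<phi> \<theta> p q = 1"
  using sgn_qp_cases gmet_theta_pos sin_theta_pos p_nonzero q_nonzero
  by (auto simp: poisson_eq_partials[OF has_partials_Eobs has_partials_Tobs]
      B_theta_eq C_theta_def C_q_def field_simps)

lemma poisson_Lobs_Thetaobs: "poisson Lobs (Thetaobs R) t \<phi> \<theta> p q = -1"
  by (simp add: poisson_eq_partials[OF has_partials_Lobs has_partials_Thetaobs])

lemma poisson_Lobs_Tobs: "poisson Lobs (Tobs R) t \<phi> \<theta> p q = 0"
  by (simp add: poisson_eq_partials[OF has_partials_Lobs has_partials_Tobs])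

lemma poisson_Thetaobs_Tobs: "poisson (Thetaobs R) (Tobs R) t \<phi> \<theta> p q = 0"
  using sgn_qp_cases gmet_theta_pos sin_theta_pos p_nonzero q_nonzero
  by (auto simp: poisson_eq_partials[OF has_partials_Thetaobs has_partials_Tobs]
      A_theta_eq B_theta_eq B0_eq C0_eq C_q_def C_p_def field_simps power2_eq_square
      power3_eq_cube)

end

theorem mainTheorem4:
  fixes R t \<phi> \<theta> pphi ptheta :: real
  assumes "R > 0" and "R \<noteq> 1"
    and "0 < \<theta>" and "\<theta> < pi" and "pphi \<noteq> 0" and "ptheta \<noteq> 0"
  shows "poisson (Eobs R) Lobs t \<phi> \<theta> pphi ptheta = 0
    \<and> poisson (Eobs R) (Thetaobs R) t \<phi> \<theta> pphi ptheta = 0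
    \<and> poisson (Eobs R) (Tobs R) t \<phi> \<theta> pphi ptheta = 1
    \<and> poisson Lobs (Thetaobs R) t \<phi> \<theta> pphi ptheta = -1
    \<and> poisson Lobs (Tobs R) t \<phi> \<theta> pphi ptheta = 0
    \<and> poisson (Thetaobs R) (Tobs R) t \<phi> \<theta> pphi ptheta = 0"
proof -
  interpret spheroid_phase_point R t \<phi> \<theta> pphi ptheta
    using assms by unfold_locales auto
  show ?thesis
    using poisson_Eobs_Lobs poisson_Eobs_Thetaobs poisson_Eobs_Tobs poisson_Lobs_Thetaobs
      poisson_Lobs_Tobs poisson_Thetaobs_Tobs
    by simp
qed

end
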